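(* Let $\mu,\nu$ be compactly supported Borel probability measures on $\mathbb{R}^d$ with $\mu\ll\mathrm{Leb}$, and let $\varphi$ be a convex Brenier potential, i.e. $T=\nabla\varphi$ satisfies $T_\#\mu=\nu$ and $(\mathrm{Id},\nabla\varphi)_\#\mu$ is the optimal coupling for the cost $c(x,y)=\frac12\|x-y\|^2$. Assume $\varphi$ is differentiable and $\nabla\varphi$ is $L$-Lipschitz. Then for every $\pi\in\Pi(\mu,\nu)$, $$\int\|y-\nabla\varphi(x)\|^2\,\pi(dx,dy)\le 2L\Big(\int c\,d\pi-\mathrm{OT}(\mu,\nu)\Big),$$ and in particular, for the QOT optimizer $\pi_\varepsilon$ ($\varepsilon>0$), $$\int\|y-\nabla\varphi(x)\|^2\,\pi_\varepsilon(dx,dy)\le 2L\Delta_\varepsilon.$$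
   Context: $\Pi(\mu,\nu)$ is the set of couplings of $\mu,\nu$; $\mathrm{OT}(\mu,\nu)=\inf_{\pi\in\Pi(\mu,\nu)}\int c\,d\pi$. With $P=\mu\otimes\nu$, $\mathrm{QOT}_\varepsilon(\mu,\nu)=\inf_{\pi\in\Pi(\mu,\nu),\pi\ll P}\{\int c\,d\pi+\frac\varepsilon2\|\frac{d\pi}{dP}\|^2_{L^2(P)}\}$, $\pi_\varepsilon$ is its unique optimizer and $\Delta_\varepsilon=\mathrm{QOT}_\varepsilon(\mu,\nu)-\mathrm{OT}(\mu,\nu)$. *)

theory Defs
  imports "HOL-Probability.Probability"
begin

definition cost :: "'a::euclidean_space \<times> 'a \<Rightarrow> real" where
  "cost z = (1/2) * (norm (fst z - snd z))^2"

definition cs_borel_prob :: "'a::euclidean_space measure \<Rightarrow> bool" where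
  "cs_borel_prob m \<longleftrightarrow> sets m = sets borel \<and> prob_space m \<and>
     (\<exists>K. compact K \<and> emeasure m (space m - K) = 0)"

definition couplings :: "'a::euclidean_space measure \<Rightarrow> 'a measure \<Rightarrow> ('a \<times> 'a) measure set" where
  "couplings \<mu> \<nu> = {\<pi>. sets \<pi> = sets (borel \<Otimes>\<^sub>M borel) \<and> prob_space \<pi> \<and>
      distr \<pi> borel fst = \<mu> \<and> distr \<pi> borel snd = \<nu>}"

definition OT :: "'a::euclidean_space measure \<Rightarrow> 'a measure \<Rightarrow> real" where
  "OT \<mu> \<nu> = (INF \<pi> \<in> couplings \<mu> \<nu>. integral\<^sup>L \<pi> cost)"

definition dens :: "'a::euclidean_space measure \<Rightarrow> 'a measure \<Rightarrow> ('a \<times> 'a) measure \<Rightarrow> 'a \<times> 'a \<Rightarrow> real" where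
  "dens \<mu> \<nu> \<pi> z = enn2real (RN_deriv (\<mu> \<Otimes>\<^sub>M \<nu>) \<pi> z)"

text \<open>Admissible couplings for QOT: pi << P and d pi/dP in L^2(P) (others have value +infinity).\<close>
definition qot_adm :: "'a::euclidean_space measure \<Rightarrow> 'a measure \<Rightarrow> ('a \<times> 'a) measure set" where
  "qot_adm \<mu> \<nu> = {\<pi> \<in> couplings \<mu> \<nu>. absolutely_continuous (\<mu> \<Otimes>\<^sub>M \<nu>) \<pi> \<and>
      integrable (\<mu> \<Otimes>\<^sub>M \<nu>) (\<lambda>z. (dens \<mu> \<nu> \<pi> z)^2)}"

definition qot_obj :: "real \<Rightarrow> 'a::euclidean_space measure \<Rightarrow> 'a measure \<Rightarrow> ('a \<times> 'a) measure \<Rightarrow> real" where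
  "qot_obj \<epsilon> \<mu> \<nu> \<pi> = integral\<^sup>L \<pi> cost +
      (\<epsilon> / 2) * (\<integral>z. (dens \<mu> \<nu> \<pi> z)^2 \<partial>(\<mu> \<Otimes>\<^sub>M \<nu>))"

definition QOT :: "real \<Rightarrow> 'a::euclidean_space measure \<Rightarrow> 'a measure \<Rightarrow> real" where
  "QOT \<epsilon> \<mu> \<nu> = (INF \<pi> \<in> qot_adm \<mu> \<nu>. qot_obj \<epsilon> \<mu> \<nu> \<pi>)"

end

theory Submission
  imports Defs
begin

text \<open>
  Let K be a compact set carrying \<mu> and \<psi> y = sup_{x \<in> K} (x \<bullet> y - \<phi> x) the conjugate of \<phi>
  restricted to K. Then cost(x,y) = (|x|^2/2 - \<phi> x) + (|y|^2/2 - \<psi> y) + g(x,y) with the duality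
  gap g(x,y) = \<phi> x + \<psi> y - x \<bullet> y. The first two terms integrate to the same value against every
  coupling, and g vanishes on the graph of T over K, so \<integral> cost d\<pi> - OT(\<mu>,\<nu>) = \<integral> g d\<pi>. Every coupling
  lives on K \<times> T(K), and for y = T x' the gap g(x,y) is the Bregman divergence
  \<phi> x - \<phi> x' - T x' \<bullet> (x - x'), which dominates |T x - y|^2 / (2L) because the gradient of a convex
  function that is L-Lipschitz is cocoercive. The QOT optimizer pays at least its transport cost,
  which gives the second claim.
\<close>

lemma has_real_derivative_along_line:
  fixes \<phi> :: "'a::real_inner \<Rightarrow> real"
  assumes grad: "\<And>x. (\<phi> has_derivative (\<lambda>h. T x \<bullet> h)) (at x)"
  shows "((\<lambda>t. \<phi> (z + t *\<^sub>R v)) has_real_derivative (T (z + t *\<^sub>R v) \<bullet> v)) (at t)"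
proof -
  have "((\<lambda>t. z + t *\<^sub>R v) has_derivative (\<lambda>h. h *\<^sub>R v)) (at t)"
    by (auto intro!: derivative_eq_intros)
  from has_derivative_compose[OF this grad] show ?thesis
    unfolding has_field_derivative_def
    by (rule has_derivative_eq_rhs) (auto simp: fun_eq_iff mult.commute)
qed

lemma convex_on_gradient_ineq:
  fixes \<phi> :: "'a::real_inner \<Rightarrow> real"
  assumes conv: "convex_on UNIV \<phi>"
    and grad: "\<And>x. (\<phi> has_derivative (\<lambda>h. T x \<bullet> h)) (at x)"
  shows "\<phi> x + T x \<bullet> (u - x) \<le> \<phi> u"
proof -
  define f where "f t = \<phi> (x + t *\<^sub>R (u - x))" for t
  have "convex_on UNIV f"
  proof (rule convex_onI)
    fix t a b :: real assume t: "0 < t" "t < 1"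
    have "f ((1 - t) *\<^sub>R a + t *\<^sub>R b)
        = \<phi> ((1 - t) *\<^sub>R (x + a *\<^sub>R (u - x)) + t *\<^sub>R (x + b *\<^sub>R (u - x)))"
      unfolding f_def by (simp add: algebra_simps)
    also have "\<dots> \<le> (1 - t) * f a + t * f b"
      unfolding f_def using t by (intro convex_onD[OF conv]) auto
    finally show "f ((1 - t) *\<^sub>R a + t *\<^sub>R b) \<le> (1 - t) * f a + t * f b" .
  qed auto
  moreover have "(f has_real_derivative (T x \<bullet> (u - x))) (at 0)"
    unfolding f_def using has_real_derivative_along_line[OF grad, of x "u - x" 0] by simp
  ultimately have "(T x \<bullet> (u - x)) * (1 - 0) \<le> f 1 - f 0"
    by (intro convex_on_imp_above_tangent) auto
  then show ?thesis by (simp add: f_def)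
qed

lemma lipschitz_gradient_upper_bound:
  fixes \<phi> :: "'a::real_inner \<Rightarrow> real"
  assumes grad: "\<And>x. (\<phi> has_derivative (\<lambda>h. T x \<bullet> h)) (at x)"
    and lip: "L-lipschitz_on UNIV T"
  shows "\<phi> (z + v) \<le> \<phi> z + T z \<bullet> v + L / 2 * (norm v)^2"
proof -
  define k where "k t = \<phi> (z + t *\<^sub>R v) - t * (T z \<bullet> v) - L / 2 * t^2 * (norm v)^2" for t
  have "k 1 \<le> k 0"
  proof (rule DERIV_nonpos_imp_nonincreasing[of 0 1 k])
    fix t :: real assume t: "0 \<le> t" "t \<le> 1"
    have k': "(k has_real_derivative (T (z + t *\<^sub>R v) \<bullet> v - T z \<bullet> v - L * t * (norm v)^2)) (at t)"
      unfolding k_def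
      by (rule has_real_derivative_along_line[OF grad] derivative_eq_intros refl | simp)+
    have "(T (z + t *\<^sub>R v) - T z) \<bullet> v \<le> norm (T (z + t *\<^sub>R v) - T z) * norm v"
      by (rule norm_cauchy_schwarz)
    also have "\<dots> \<le> L * norm (t *\<^sub>R v) * norm v"
      using lipschitz_onD[OF lip, of "z + t *\<^sub>R v" z] by (intro mult_right_mono) (auto simp: dist_norm)
    finally have "T (z + t *\<^sub>R v) \<bullet> v - T z \<bullet> v - L * t * (norm v)^2 \<le> 0"
      using t by (simp add: inner_diff_left power2_eq_square)
    with k' show "\<exists>y. (k has_real_derivative y) (at t) \<and> y \<le> 0" by blast
  qed simp
  then show ?thesis unfolding k_def by simp
qed

lemma lipschitz_gradient_cocoercive:
  fixes \<phi> :: "'a::real_inner \<Rightarrow> real"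
  assumes conv: "convex_on UNIV \<phi>"
    and grad: "\<And>x. (\<phi> has_derivative (\<lambda>h. T x \<bullet> h)) (at x)"
    and lip: "L-lipschitz_on UNIV T"
  shows "(norm (T x - T x'))^2 \<le> 2 * L * (\<phi> x - \<phi> x' - T x' \<bullet> (x - x'))"
proof (cases "L = 0")
  case True
  then show ?thesis using lipschitz_onD[OF lip, of x x'] by simp
next
  case False
  then have L: "L > 0" using lipschitz_on_nonneg[OF lip] by simp
  define w where "w = T x - T x'"
  \<comment> \<open>Compare the quadratic upper bound at x with the tangent plane at x', one gradient step
    v = - w / L away from x.\<close>
  define v where "v = - (1 / L) *\<^sub>R w"
  have "\<phi> x' + T x' \<bullet> (x + v - x') \<le> \<phi> (x + v)"
    by (rule convex_on_gradient_ineq[OF conv grad])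
  also have "\<dots> \<le> \<phi> x + T x \<bullet> v + L / 2 * (norm v)^2"
    by (rule lipschitz_gradient_upper_bound[OF grad lip])
  finally have "\<phi> x' + T x' \<bullet> (x - x') \<le> \<phi> x + (w \<bullet> v + L / 2 * (norm v)^2)"
    by (simp add: w_def inner_diff_left inner_diff_right inner_add_right)
  also have "w \<bullet> v + L / 2 * (norm v)^2 = - ((norm w)^2 / (2 * L))"
    using L by (simp add: v_def field_simps power2_eq_square flip: power2_norm_eq_inner)
  finally show ?thesis using L by (simp add: w_def field_simps)
qed

text \<open>Restricting the supremum to a compact set keeps the conjugate finite and Lipschitz.\<close>
definition restricted_conjugate :: "'a set \<Rightarrow> ('a::real_inner \<Rightarrow> real) \<Rightarrow> 'a \<Rightarrow> real" where
  "restricted_conjugate K \<phi> y = (SUP x\<in>K. x \<bullet> y - \<phi> x)"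

lemma continuous_on_restricted_conjugate:
  fixes \<phi> :: "'a::real_inner \<Rightarrow> real"
  assumes K: "compact K" and cphi: "continuous_on K \<phi>"
  shows "continuous_on UNIV (restricted_conjugate K \<phi>)"
proof (cases "K = {}")
  case True
  then show ?thesis by (simp add: restricted_conjugate_def)
next
  case False
  obtain R where R: "R > 0" "\<And>x. x \<in> K \<Longrightarrow> norm x \<le> R"
    using compact_imp_bounded[OF K] by (auto simp: bounded_pos)
  have bdd: "bdd_above ((\<lambda>x. x \<bullet> y - \<phi> x) ` K)" for y
  proof -
    have "continuous_on K (\<lambda>x. x \<bullet> y - \<phi> x)"
      by (intro continuous_intros cphi)
    from compact_continuous_image[OF this K] show ?thesis
      by (intro bounded_imp_bdd_above compact_imp_bounded)
  qed
  have le: "restricted_conjugate K \<phi> y \<le> restricted_conjugate K \<phi> y' + R * norm (y - y')" for y y'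
    unfolding restricted_conjugate_def
  proof (rule cSUP_least[OF False])
    fix x assume x: "x \<in> K"
    have "x \<bullet> (y - y') \<le> R * norm (y - y')"
      using norm_cauchy_schwarz[of x "y - y'"] R(2)[OF x] by (smt (verit) mult_right_mono norm_ge_zero)
    moreover have "x \<bullet> y' - \<phi> x \<le> (SUP x\<in>K. x \<bullet> y' - \<phi> x)"
      using x bdd by (intro cSUP_upper)
    ultimately show "x \<bullet> y - \<phi> x \<le> (SUP x\<in>K. x \<bullet> y' - \<phi> x) + R * norm (y - y')"
      by (simp add: inner_diff_right)
  qed
  have "R-lipschitz_on UNIV (restricted_conjugate K \<phi>)"
    using le R(1) by (intro lipschitz_onI) (smt (verit) dist_norm norm_minus_commute real_norm_def)+
  then show ?thesis by (rule lipschitz_on_continuous_on)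
qed

lemma restricted_conjugate_gradient:
  fixes \<phi> :: "'a::real_inner \<Rightarrow> real"
  assumes conv: "convex_on UNIV \<phi>"
    and grad: "\<And>x. (\<phi> has_derivative (\<lambda>h. T x \<bullet> h)) (at x)"
    and "x' \<in> K"
  shows "restricted_conjugate K \<phi> (T x') = x' \<bullet> T x' - \<phi> x'"
  unfolding restricted_conjugate_def
proof (rule cSup_eq_maximum)
  show "x' \<bullet> T x' - \<phi> x' \<in> (\<lambda>x. x \<bullet> T x' - \<phi> x) ` K" using \<open>x' \<in> K\<close> by auto
next
  fix a assume "a \<in> (\<lambda>x. x \<bullet> T x' - \<phi> x) ` K"
  then obtain x where "a = x \<bullet> T x' - \<phi> x" by auto
  with convex_on_gradient_ineq[OF conv grad, of x' x] show "a \<le> x' \<bullet> T x' - \<phi> x'"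
    by (simp add: inner_diff_right inner_commute)
qed

lemma integrable_continuous_AE_compact:
  fixes f :: "'b::topological_space \<Rightarrow> real"
  assumes "finite_measure M" "sets M = sets borel" "compact C" "AE z in M. z \<in> C"
    and "continuous_on UNIV f"
  shows "integrable M f"
proof -
  interpret finite_measure M by fact
  obtain B where "\<And>z. z \<in> C \<Longrightarrow> norm (f z) \<le> B"
    using compact_imp_bounded[OF compact_continuous_image[OF continuous_on_subset[OF assms(5)] assms(3)]]
    by (auto simp: bounded_iff)
  moreover have "f \<in> borel_measurable M"
    using borel_measurable_continuous_onI[OF assms(5)] measurable_cong_sets[OF assms(2) refl] by blast
  ultimately show ?thesis
    using assms(4) by (intro integrable_const_bound[of f B]) auto
qed

lemma cs_borel_prob_AE_compact:
  assumes "cs_borel_prob \<mu>"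
  obtains K where "compact K" "AE x in \<mu>. x \<in> K"
proof -
  from assms obtain K where K: "compact K" "emeasure \<mu> (space \<mu> - K) = 0" and "sets \<mu> = sets borel"
    by (auto simp: cs_borel_prob_def)
  then have "space \<mu> - K \<in> sets \<mu>"
    by (metis borel_open compact_imp_closed open_Diff open_UNIV sets_eq_imp_space_eq space_borel)
  with K have "AE x in \<mu>. x \<in> K"
    by (intro AE_I'[of "space \<mu> - K"]) auto
  with K(1) show thesis by (rule that)
qed

lemma couplings_AE_Times:
  assumes "\<pi> \<in> couplings \<mu> \<nu>" "AE x in \<mu>. x \<in> A" "AE y in \<nu>. y \<in> B"
    and "A \<in> sets borel" "B \<in> sets borel"
  shows "AE z in \<pi>. z \<in> A \<times> B"
proof -
  have sets: "sets \<pi> = sets (borel \<Otimes>\<^sub>M borel)" and "distr \<pi> borel fst = \<mu>" "distr \<pi> borel snd = \<nu>"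
    using assms(1) by (auto simp: couplings_def)
  moreover have "fst \<in> measurable \<pi> borel" "snd \<in> measurable \<pi> borel"
    using measurable_cong_sets[OF sets refl] by auto
  ultimately have "AE z in \<pi>. fst z \<in> A" "AE z in \<pi>. snd z \<in> B"
    using assms(2-5) by (auto simp: AE_distr_iff)
  then show ?thesis by eventually_elim (simp add: mem_Times_iff)
qed

lemma couplings_integral_fst:
  fixes f :: "'a::euclidean_space \<Rightarrow> 'b::{banach, second_countable_topology}"
  assumes "\<pi> \<in> couplings \<mu> \<nu>" "f \<in> borel_measurable borel"
  shows "(\<integral>z. f (fst z) \<partial>\<pi>) = integral\<^sup>L \<mu> f"
proof -
  have "sets \<pi> = sets (borel \<Otimes>\<^sub>M borel)" "distr \<pi> borel fst = \<mu>"
    using assms(1) by (auto simp: couplings_def)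
  then show ?thesis
    using integral_distr[of fst \<pi> borel f] assms(2) measurable_cong_sets by fastforce
qed

lemma couplings_integral_snd:
  fixes f :: "'a::euclidean_space \<Rightarrow> 'b::{banach, second_countable_topology}"
  assumes "\<pi> \<in> couplings \<mu> \<nu>" "f \<in> borel_measurable borel"
  shows "(\<integral>z. f (snd z) \<partial>\<pi>) = integral\<^sup>L \<nu> f"
proof -
  have "sets \<pi> = sets (borel \<Otimes>\<^sub>M borel)" "distr \<pi> borel snd = \<nu>"
    using assms(1) by (auto simp: couplings_def)
  then show ?thesis
    using integral_distr[of snd \<pi> borel f] assms(2) measurable_cong_sets by fastforce
qed

lemma couplings_integrable_continuous:
  fixes f :: "'a::euclidean_space \<times> 'a \<Rightarrow> real"
  assumes \<pi>: "\<pi> \<in> couplings \<mu> \<nu>" and "compact K" "compact K'"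
    and "AE x in \<mu>. x \<in> K" "AE y in \<nu>. y \<in> K'" and f: "continuous_on UNIV f"
  shows "integrable \<pi> f"
proof (rule integrable_continuous_AE_compact[OF _ _ _ _ f])
  show "finite_measure \<pi>"
    using \<pi> by (simp add: couplings_def prob_space.finite_measure)
  have "sets \<pi> = sets (borel \<Otimes>\<^sub>M borel)"
    using \<pi> by (simp add: couplings_def)
  then show "sets \<pi> = sets borel"
    by (simp only: borel_prod)
  show "compact (K \<times> K')"
    using assms by (simp add: compact_Times)
  show "AE z in \<pi>. z \<in> K \<times> K'"
    using assms by (intro couplings_AE_Times borel_compact)
qed

definition duality_gap :: "('a::real_inner \<Rightarrow> real) \<Rightarrow> ('a \<Rightarrow> real) \<Rightarrow> 'a \<times> 'a \<Rightarrow> real" where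
  "duality_gap \<phi> \<psi> z = \<phi> (fst z) + \<psi> (snd z) - fst z \<bullet> snd z"

lemma continuous_on_duality_gap:
  assumes "continuous_on UNIV \<phi>" "continuous_on UNIV \<psi>"
  shows "continuous_on UNIV (duality_gap \<phi> \<psi>)"
  unfolding duality_gap_def[abs_def]
  by (intro continuous_intros continuous_on_compose2[OF assms(1)] continuous_on_compose2[OF assms(2)]) auto

lemma integral_cost_couplings_split:
  fixes \<phi> \<psi> :: "'a::euclidean_space \<Rightarrow> real"
  assumes \<pi>: "\<pi> \<in> couplings \<mu> \<nu>" and K: "compact K" "AE x in \<mu>. x \<in> K"
    and K': "compact K'" "AE y in \<nu>. y \<in> K'"
    and cphi: "continuous_on UNIV \<phi>" and cpsi: "continuous_on UNIV \<psi>"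
  shows "integral\<^sup>L \<pi> cost = (\<integral>x. (norm x)^2 / 2 - \<phi> x \<partial>\<mu>) + (\<integral>y. (norm y)^2 / 2 - \<psi> y \<partial>\<nu>)
           + integral\<^sup>L \<pi> (duality_gap \<phi> \<psi>)"
proof -
  define A where "A x = (norm x)^2 / 2 - \<phi> x" for x :: 'a
  define B where "B y = (norm y)^2 / 2 - \<psi> y" for y :: 'a
  have cA: "continuous_on UNIV A" and cB: "continuous_on UNIV B"
    unfolding A_def[abs_def] B_def[abs_def] by (auto intro!: continuous_intros cphi cpsi)
  have "continuous_on UNIV (\<lambda>z. A (fst z))" "continuous_on UNIV (\<lambda>z. B (snd z))"
    by (auto intro!: continuous_on_compose2[OF cA] continuous_on_compose2[OF cB] continuous_intros)
  then have integrable: "integrable \<pi> (\<lambda>z. A (fst z))" "integrable \<pi> (\<lambda>z. B (snd z))"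
    "integrable \<pi> (duality_gap \<phi> \<psi>)"
    using couplings_integrable_continuous[OF \<pi> K(1) K'(1) K(2) K'(2)]
      continuous_on_duality_gap[OF cphi cpsi] by blast+
  have "integral\<^sup>L \<pi> cost = (\<integral>z. A (fst z) + B (snd z) + duality_gap \<phi> \<psi> z \<partial>\<pi>)"
    by (intro Bochner_Integration.integral_cong)
      (auto simp: cost_def A_def B_def duality_gap_def power2_norm_eq_inner inner_diff_left
        inner_diff_right inner_commute field_simps)
  also have "\<dots> = (\<integral>z. A (fst z) \<partial>\<pi>) + (\<integral>z. B (snd z) \<partial>\<pi>) + integral\<^sup>L \<pi> (duality_gap \<phi> \<psi>)"
    using integrable by simp
  also have "\<dots> = integral\<^sup>L \<mu> A + integral\<^sup>L \<nu> B + integral\<^sup>L \<pi> (duality_gap \<phi> \<psi>)"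
    using couplings_integral_fst[OF \<pi> borel_measurable_continuous_onI[OF cA]]
      couplings_integral_snd[OF \<pi> borel_measurable_continuous_onI[OF cB]] by simp
  finally show ?thesis
    unfolding A_def[abs_def] B_def[abs_def] .
qed

lemma AE_distr_compact_image:
  fixes T :: "'a::topological_space \<Rightarrow> 'b::t2_space"
  assumes "sets \<mu> = sets borel" "continuous_on UNIV T" "compact K" "AE x in \<mu>. x \<in> K"
  shows "AE y in distr \<mu> borel T. y \<in> T ` K"
proof -
  have "T \<in> borel_measurable \<mu>"
    using assms(1,2) borel_measurable_continuous_onI measurable_cong_sets by blast
  moreover have "T ` K \<in> sets borel"
    using assms(2,3) by (intro borel_compact compact_continuous_image) (auto intro: continuous_on_subset)
  ultimately show ?thesis
    using assms(4) by (subst AE_distr_iff) (auto elim: AE_mp)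
qed

lemma integral_graph_coupling_eq_0:
  fixes T :: "'a::euclidean_space \<Rightarrow> 'a" and f :: "'a \<times> 'a \<Rightarrow> real"
  assumes "sets \<mu> = sets borel" "continuous_on UNIV T" "continuous_on UNIV f"
    and "AE x in \<mu>. f (x, T x) = 0"
  shows "integral\<^sup>L (distr \<mu> (borel \<Otimes>\<^sub>M borel) (\<lambda>x. (x, T x))) f = 0"
proof -
  have "T \<in> borel_measurable \<mu>"
    using assms(1,2) borel_measurable_continuous_onI measurable_cong_sets by blast
  then have "(\<lambda>x. (x, T x)) \<in> measurable \<mu> (borel \<Otimes>\<^sub>M borel)"
    by (intro measurable_Pair) (simp_all add: measurable_ident_sets[OF assms(1)])
  moreover have "f \<in> borel_measurable (borel \<Otimes>\<^sub>M borel)"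
    unfolding borel_prod using assms(3) by (rule borel_measurable_continuous_onI)
  ultimately have "integral\<^sup>L (distr \<mu> (borel \<Otimes>\<^sub>M borel) (\<lambda>x. (x, T x))) f = (\<integral>x. f (x, T x) \<partial>\<mu>)"
    by (rule integral_distr)
  also have "\<dots> = 0"
    using assms(4) by (rule integral_eq_zero_AE)
  finally show ?thesis .
qed

lemma gradient_deviation_le_excess_cost:
  fixes \<mu> \<nu> :: "'a::euclidean_space measure" and \<phi> :: "'a \<Rightarrow> real" and T :: "'a \<Rightarrow> 'a"
  assumes mu: "cs_borel_prob \<mu>"
    and conv: "convex_on UNIV \<phi>"
    and grad: "\<And>x. (\<phi> has_derivative (\<lambda>h. T x \<bullet> h)) (at x)"
    and push: "distr \<mu> borel T = \<nu>"
    and opt_cpl: "distr \<mu> (borel \<Otimes>\<^sub>M borel) (\<lambda>x. (x, T x)) \<in> couplings \<mu> \<nu>"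
    and opt: "integral\<^sup>L (distr \<mu> (borel \<Otimes>\<^sub>M borel) (\<lambda>x. (x, T x))) cost = OT \<mu> \<nu>"
    and lip: "L-lipschitz_on UNIV T"
    and \<pi>: "\<pi> \<in> couplings \<mu> \<nu>"
  shows "(\<integral>z. (norm (snd z - T (fst z)))^2 \<partial>\<pi>) \<le> 2 * L * (integral\<^sup>L \<pi> cost - OT \<mu> \<nu>)"
proof -
  obtain K where K: "compact K" "AE x in \<mu>. x \<in> K"
    using cs_borel_prob_AE_compact[OF mu] by blast
  have smu: "sets \<mu> = sets borel"
    using mu by (simp add: cs_borel_prob_def)
  have cT: "continuous_on UNIV T"
    using lip by (rule lipschitz_on_continuous_on)
  have cphi: "continuous_on UNIV \<phi>"
    using grad by (intro continuous_at_imp_continuous_on) (auto intro: has_derivative_continuous)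
  have TK: "compact (T ` K)"
    using compact_continuous_image[OF continuous_on_subset[OF cT] K(1)] by simp
  have nu_TK: "AE y in \<nu>. y \<in> T ` K"
    using AE_distr_compact_image[OF smu cT K] unfolding push .
  define \<psi> where "\<psi> = restricted_conjugate K \<phi>"
  have cpsi: "continuous_on UNIV \<psi>"
    unfolding \<psi>_def using K(1) continuous_on_subset[OF cphi]
    by (intro continuous_on_restricted_conjugate) auto
  have gap_gradient: "duality_gap \<phi> \<psi> (x, T x') = \<phi> x - \<phi> x' - T x' \<bullet> (x - x')" if "x' \<in> K" for x x'
    using restricted_conjugate_gradient[OF conv grad that]
    by (simp add: \<psi>_def duality_gap_def inner_diff_right inner_commute)
  note split = integral_cost_couplings_split[OF _ K TK nu_TK cphi cpsi]
  have "integral\<^sup>L (distr \<mu> (borel \<Otimes>\<^sub>M borel) (\<lambda>x. (x, T x))) (duality_gap \<phi> \<psi>) = 0"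
    using K(2) by (intro integral_graph_coupling_eq_0 smu cT continuous_on_duality_gap cphi cpsi)
      (auto simp: gap_gradient elim: AE_mp)
  then have excess: "integral\<^sup>L \<pi> cost - OT \<mu> \<nu> = integral\<^sup>L \<pi> (duality_gap \<phi> \<psi>)"
    using split[OF opt_cpl] split[OF \<pi>] opt by simp
  have "AE z in \<pi>. (norm (snd z - T (fst z)))^2 \<le> 2 * L * duality_gap \<phi> \<psi> z"
    using couplings_AE_Times[OF \<pi> K(2) nu_TK borel_compact[OF K(1)] borel_compact[OF TK]]
  proof eventually_elim
    case (elim z)
    then obtain x x' where "z = (x, T x')" and "x' \<in> K" by auto
    then show ?case
      using lipschitz_gradient_cocoercive[OF conv grad lip, of x x'] gap_gradient[of x' x]
      by (simp add: norm_minus_commute)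
  qed
  moreover have "continuous_on UNIV (\<lambda>z. (norm (snd z - T (fst z)))^2)"
    by (auto intro!: continuous_intros continuous_on_compose2[OF cT])
  ultimately have "(\<integral>z. (norm (snd z - T (fst z)))^2 \<partial>\<pi>) \<le> (\<integral>z. 2 * L * duality_gap \<phi> \<psi> z \<partial>\<pi>)"
    using couplings_integrable_continuous[OF \<pi> K(1) TK K(2) nu_TK]
      continuous_on_duality_gap[OF cphi cpsi]
    by (intro integral_mono_AE) auto
  then show ?thesis
    using excess by simp
qed

lemma integral_cost_le_qot_obj:
  assumes "\<epsilon> \<ge> 0"
  shows "integral\<^sup>L \<pi> cost \<le> qot_obj \<epsilon> \<mu> \<nu> \<pi>"
  using assms by (simp add: qot_obj_def)

theorem lemma3p8:
  fixes \<mu> \<nu> :: "'a::euclidean_space measure"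
    and \<phi> :: "'a \<Rightarrow> real" and T :: "'a \<Rightarrow> 'a" and L \<epsilon> :: real
    and \<pi>\<epsilon> :: "('a \<times> 'a) measure"
  assumes mu: "cs_borel_prob \<mu>" and nu: "cs_borel_prob \<nu>"
    and ac: "absolutely_continuous lborel \<mu>"
    and conv: "convex_on UNIV \<phi>"
    and grad: "\<And>x. (\<phi> has_derivative (\<lambda>h. T x \<bullet> h)) (at x)"
    and push: "distr \<mu> borel T = \<nu>"
    and opt_cpl: "distr \<mu> (borel \<Otimes>\<^sub>M borel) (\<lambda>x. (x, T x)) \<in> couplings \<mu> \<nu>"
    and opt: "integral\<^sup>L (distr \<mu> (borel \<Otimes>\<^sub>M borel) (\<lambda>x. (x, T x))) cost = OT \<mu> \<nu>"
    and lip: "L-lipschitz_on UNIV T"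
    and eps: "\<epsilon> > 0"
    and peps_adm: "\<pi>\<epsilon> \<in> qot_adm \<mu> \<nu>"
    and peps_opt: "qot_obj \<epsilon> \<mu> \<nu> \<pi>\<epsilon> = QOT \<epsilon> \<mu> \<nu>"
  shows "(\<forall>\<pi> \<in> couplings \<mu> \<nu>.
            (\<integral>z. (norm (snd z - T (fst z)))^2 \<partial>\<pi>) \<le> 2 * L * (integral\<^sup>L \<pi> cost - OT \<mu> \<nu>))
       \<and> (\<integral>z. (norm (snd z - T (fst z)))^2 \<partial>\<pi>\<epsilon>) \<le> 2 * L * (QOT \<epsilon> \<mu> \<nu> - OT \<mu> \<nu>)"
proof -
  have deviation: "(\<integral>z. (norm (snd z - T (fst z)))^2 \<partial>\<pi>) \<le> 2 * L * (integral\<^sup>L \<pi> cost - OT \<mu> \<nu>)"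
    if "\<pi> \<in> couplings \<mu> \<nu>" for \<pi>
    using gradient_deviation_le_excess_cost[OF mu conv grad push opt_cpl opt lip that] .
  have "\<pi>\<epsilon> \<in> couplings \<mu> \<nu>"
    using peps_adm by (simp add: qot_adm_def)
  moreover have "integral\<^sup>L \<pi>\<epsilon> cost \<le> QOT \<epsilon> \<mu> \<nu>"
    using integral_cost_le_qot_obj[of \<epsilon> \<pi>\<epsilon> \<mu> \<nu>] eps unfolding peps_opt by simp
  ultimately have "(\<integral>z. (norm (snd z - T (fst z)))^2 \<partial>\<pi>\<epsilon>) \<le> 2 * L * (QOT \<epsilon> \<mu> \<nu> - OT \<mu> \<nu>)"
    using deviation[of \<pi>\<epsilon>] lipschitz_on_nonneg[OF lip] by (smt (verit) mult_left_mono)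
  with deviation show ?thesis by blast
qed

end
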